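(* Consider an HTSP instance in which all speeds are powers of two, and let $M>0$ be at least its optimal makespan. Then for every level $\ell\ge0$, $\mathrm{MST}(G/V_{<\ell})\le M\sum_{j\ge \ell-1}2^j\mu_j$.
   Context: HTSP: the input is a finite metric space $(V,d)$, a depot $r\in V$, and $k$ vehicles with speeds $\lambda_1,\dots,\lambda_k\ge1$. A solution is a collection of tours, each starting and ending at $r$, that cover $V$. Its makespan is $\max_i d(\tau_i)/\lambda_i$. Here all speeds are powers of two, $\mu_j$ is the number of vehicles of speed $2^j$, and $\mu_{-1}=0$. Levels relative to $M$: $V_0=\{u:d(r,u)\le M\}$, and for $i\ge1$, $V_i=\{u:2^{i-1}M<d(r,u)\le2^iM\}$. Also $V_{<\ell}=\bigcup_{j<\ell}V_j$, with $V_{<0}=\emptyset$. $G$ is the complete graph on $V$ weighted by $d$. $G/U$ contracts $U$ to a single vertex, keeping parallel edges. $\mathrm{MST}$ denotes the minimum spanning tree weight. *)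

theory Defs
  imports Main "HOL-Library.Disjoint_Sets" Complex_Main
begin

definition metric_on :: "'a set \<Rightarrow> ('a \<Rightarrow> 'a \<Rightarrow> real) \<Rightarrow> bool" where
  "metric_on V d \<longleftrightarrow> finite V \<and>
     (\<forall>x\<in>V. d x x = 0) \<and>
     (\<forall>x\<in>V. \<forall>y\<in>V. x \<noteq> y \<longrightarrow> d x y > 0) \<and>
     (\<forall>x\<in>V. \<forall>y\<in>V. d x y = d y x) \<and>
     (\<forall>x\<in>V. \<forall>y\<in>V. \<forall>z\<in>V. d x z \<le> d x y + d y z)"

definition is_tour :: "'a set \<Rightarrow> 'a \<Rightarrow> 'a list \<Rightarrow> bool" where
  "is_tour V r t \<longleftrightarrow> t \<noteq> [] \<and> hd t = r \<and> last t = r \<and> set t \<subseteq> V"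

definition tour_len :: "('a \<Rightarrow> 'a \<Rightarrow> real) \<Rightarrow> 'a list \<Rightarrow> real" where
  "tour_len d t = (\<Sum>i< length t - 1. d (t ! i) (t ! Suc i))"

definition is_solution :: "'a set \<Rightarrow> 'a \<Rightarrow> nat \<Rightarrow> (nat \<Rightarrow> 'a list) \<Rightarrow> bool" where
  "is_solution V r k \<tau> \<longleftrightarrow> (\<forall>i<k. is_tour V r (\<tau> i)) \<and> V \<subseteq> (\<Union>i<k. set (\<tau> i))"

definition makespan :: "('a \<Rightarrow> 'a \<Rightarrow> real) \<Rightarrow> nat \<Rightarrow> (nat \<Rightarrow> real) \<Rightarrow> (nat \<Rightarrow> 'a list) \<Rightarrow> real" where
  "makespan d k spd \<tau> = Max ((\<lambda>i. tour_len d (\<tau> i) / spd i) ` {..<k})"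

definition opt_makespan :: "'a set \<Rightarrow> ('a \<Rightarrow> 'a \<Rightarrow> real) \<Rightarrow> 'a \<Rightarrow> nat \<Rightarrow> (nat \<Rightarrow> real) \<Rightarrow> real" where
  "opt_makespan V d r k spd = Inf {makespan d k spd \<tau> | \<tau>. is_solution V r k \<tau>}"

definition mu :: "nat \<Rightarrow> (nat \<Rightarrow> real) \<Rightarrow> nat \<Rightarrow> nat" where
  "mu k spd j = card {i. i < k \<and> spd i = 2 ^ j}"

definition level :: "'a set \<Rightarrow> ('a \<Rightarrow> 'a \<Rightarrow> real) \<Rightarrow> 'a \<Rightarrow> real \<Rightarrow> nat \<Rightarrow> 'a set" where
  "level V d r M i =
     (if i = 0 then {u\<in>V. d r u \<le> M}
      else {u\<in>V. 2 ^ (i - 1) * M < d r u \<and> d r u \<le> 2 ^ i * M})"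

definition levels_below :: "'a set \<Rightarrow> ('a \<Rightarrow> 'a \<Rightarrow> real) \<Rightarrow> 'a \<Rightarrow> real \<Rightarrow> nat \<Rightarrow> 'a set" where
  "levels_below V d r M l = (\<Union>j<l. level V d r M j)"

text \<open>The contracted graph G/U: vertices are the images of V under \<open>contr U\<close>
  (all of U becomes the single vertex None); its edges are the edges {a,b} of the
  complete graph G not lying inside U (edges inside U become loops, irrelevant
  for spanning trees), parallel edges kept. An edge {a,b} is encoded by one
  ordered pair (a,b); a set F of such pairs with card F = |W| - 1 that connects
  W cannot contain both orientations of the same edge, so these are exactly
  the spanning trees of G/U.\<close>
definition contr :: "'a set \<Rightarrow> 'a \<Rightarrow> 'a option" where
  "contr U x = (if x \<in> U then None else Some x)"

definition contr_edges :: "'a set \<Rightarrow> 'a set \<Rightarrow> ('a \<times> 'a) set" where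
  "contr_edges V U = {(a, b). a \<in> V \<and> b \<in> V \<and> a \<noteq> b \<and> \<not> (a \<in> U \<and> b \<in> U)}"

definition is_spanning_tree_contr :: "'a set \<Rightarrow> 'a set \<Rightarrow> ('a \<times> 'a) set \<Rightarrow> bool" where
  "is_spanning_tree_contr V U F \<longleftrightarrow>
     F \<subseteq> contr_edges V U \<and>
     card F + 1 = card (contr U ` V) \<and>
     (\<forall>x\<in>contr U ` V. \<forall>y\<in>contr U ` V.
        (x, y) \<in> ({(contr U a, contr U b) | a b. (a, b) \<in> F \<or> (b, a) \<in> F})\<^sup>*)"

definition MST_contr :: "'a set \<Rightarrow> ('a \<Rightarrow> 'a \<Rightarrow> real) \<Rightarrow> 'a set \<Rightarrow> real" where
  "MST_contr V d U = Min {(\<Sum>(a, b)\<in>F. d a b) | F. is_spanning_tree_contr V U F}"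

end

theory Submission
  imports Defs
begin

(* Fix M' with M < M' < 2M.  Since the optimal makespan is below M', some solution
   has every tour of vehicle i shorter than spd i * M'.  A vertex v outside V_{<l}
   satisfies d(r,v) > 2^(l-1) M, and a tour through v has length >= 2 d(r,v), so
   only vehicles of speed >= 2^(l-1) visit such vertices.  The steps of these
   "fast" tours that leave V_{<l} connect the contracted graph G/V_{<l}; a spanning
   tree extracted from them (Prim-style growth) costs at most their total length
   M' * sum of fast speeds, which regroups by speed class into M' * sum 2^j mu_j.
   Letting M' tend to M gives the claim. *)

definition adj :: "('a \<Rightarrow> 'b) \<Rightarrow> ('a \<times> 'a) set \<Rightarrow> ('b \<times> 'b) set" where
  "adj c F = {(c a, c b) | a b. (a, b) \<in> F \<or> (b, a) \<in> F}"

lemma adj_mono: "F \<subseteq> G \<Longrightarrow> adj c F \<subseteq> adj c G"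
  unfolding adj_def by blast

lemma sym_adj: "sym (adj c F)"
  unfolding adj_def sym_def by blast

lemma rtrancl_exit_step:
  assumes "(x, y) \<in> R\<^sup>*" "x \<in> S" "y \<notin> S"
  shows "\<exists>u w. (u, w) \<in> R \<and> u \<in> S \<and> w \<notin> S"
  using assms by (induction rule: rtrancl_induct) auto

definition rooted_tree :: "('a \<Rightarrow> 'b) \<Rightarrow> 'b \<Rightarrow> 'b set \<Rightarrow> ('a \<times> 'a) set \<Rightarrow> bool" where
  "rooted_tree c rt S F \<longleftrightarrow> rt \<in> S \<and> finite F \<and> card F + 1 = card S \<and>
     (\<forall>(a, b)\<in>F. c a \<in> S \<and> c b \<in> S) \<and> (\<forall>x\<in>S. (rt, x) \<in> (adj c F)\<^sup>*)"

lemma rooted_tree_grow: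
  assumes T: "rooted_tree c rt S F" and FE: "F \<subseteq> E" and fE: "finite E"
    and SW: "S \<subseteq> W" "S \<noteq> W"
    and EW: "\<forall>(a, b)\<in>E. c a \<in> W \<and> c b \<in> W"
    and conn: "\<forall>x\<in>W. (rt, x) \<in> (adj c E)\<^sup>*"
  shows "\<exists>w e. w \<in> W - S \<and> e \<in> E \<and> rooted_tree c rt (insert w S) (insert e F)"
proof -
  have fS: "finite S" using T card.infinite unfolding rooted_tree_def by fastforce
  obtain y where y: "y \<in> W" "y \<notin> S" using SW by blast
  obtain u w where uw: "(u, w) \<in> adj c E" "u \<in> S" "w \<notin> S"
    using rtrancl_exit_step[OF conn[rule_format, OF y(1)] _ y(2)] T
    unfolding rooted_tree_def by blast
  then obtain a b where ab: "u = c a" "w = c b" "(a, b) \<in> E \<or> (b, a) \<in> E"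
    unfolding adj_def by blast
  then obtain e where e: "e \<in> E" "e = (a, b) \<or> e = (b, a)" by blast
  have "e \<notin> F" using T e(2) ab uw(3) unfolding rooted_tree_def by auto
  moreover have "w \<in> W" using EW e ab by auto
  moreover have "(u, w) \<in> adj c (insert e F)" using e ab unfolding adj_def by blast
  moreover have "\<forall>x\<in>S. (rt, x) \<in> (adj c (insert e F))\<^sup>*"
    using T rtrancl_mono[OF adj_mono[of F "insert e F"]] unfolding rooted_tree_def by blast
  ultimately have "rooted_tree c rt (insert w S) (insert e F)"
    using T fS e ab uw unfolding rooted_tree_def
    by (auto intro: rtrancl_into_rtrancl)
  then show ?thesis using \<open>w \<in> W\<close> uw(3) e(1) by blast
qed

lemma spanning_subtree_exists:
  assumes fW: "finite W" and fE: "finite E" and rt: "rt \<in> W"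
    and EW: "\<forall>(a, b)\<in>E. c a \<in> W \<and> c b \<in> W"
    and conn: "\<forall>x\<in>W. (rt, x) \<in> (adj c E)\<^sup>*"
  shows "\<exists>F\<subseteq>E. card F + 1 = card W \<and> (\<forall>x\<in>W. \<forall>y\<in>W. (x, y) \<in> (adj c F)\<^sup>*)"
proof -
  have grown: "\<exists>S F. S \<subseteq> W \<and> F \<subseteq> E \<and> card S = Suc n \<and> rooted_tree c rt S F"
    if "n < card W" for n
    using that
  proof (induction n)
    case 0
    have "rooted_tree c rt {rt} {}" unfolding rooted_tree_def by simp
    moreover have "{rt} \<subseteq> W" "card {rt} = Suc 0" using rt by auto
    ultimately show ?case by blast
  next
    case (Suc n)
    then obtain S F where S: "S \<subseteq> W" "F \<subseteq> E" "card S = Suc n" "rooted_tree c rt S F"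
      by (meson Suc_lessD)
    then have "S \<noteq> W" using Suc.prems by auto
    then obtain w e where we: "w \<in> W" "w \<notin> S" "e \<in> E"
      and T: "rooted_tree c rt (insert w S) (insert e F)"
      using rooted_tree_grow[OF S(4,2) fE S(1) _ EW conn] by blast
    have "finite S" using S(1) fW finite_subset by blast
    then have "card (insert w S) = Suc (Suc n)" using we(2) S(3) by simp
    moreover have "insert w S \<subseteq> W" "insert e F \<subseteq> E" using S(1,2) we by auto
    ultimately show ?case using T by blast
  qed
  obtain S F where S: "S \<subseteq> W" "F \<subseteq> E" "card S = card W" "rooted_tree c rt S F"
  proof -
    have pos: "card W > 0" using rt fW card_gt_0_iff by blast
    then have "Suc (card W - 1) = card W" by simp
    then show thesis using grown[of "card W - 1"] that pos by auto
  qed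
  have "S = W" using card_subset_eq[OF fW S(1,3)] .
  have reach: "\<forall>x\<in>W. (rt, x) \<in> (adj c F)\<^sup>*" and cardF: "card F + 1 = card W"
    using S(4) \<open>S = W\<close> unfolding rooted_tree_def by blast+
  have "(x, y) \<in> (adj c F)\<^sup>*" if "x \<in> W" "y \<in> W" for x y
  proof -
    have "(rt, x) \<in> (adj c F)\<^sup>*" using reach that(1) by blast
    then have "(x, rt) \<in> (adj c F)\<^sup>*" by (rule symD[OF sym_rtrancl[OF sym_adj]])
    then show ?thesis using reach that(2) by (blast intro: rtrancl_trans)
  qed
  then show ?thesis using S(2) cardF by blast
qed

lemma d_nonneg:
  assumes "metric_on V d" "x \<in> V" "y \<in> V" shows "0 \<le> d x y"
  using assms unfolding metric_on_def by (cases "x = y") (auto intro: less_imp_le)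

(* The MST of G/U costs at most any edge set of G/U connecting all contracted
   vertices, since such a set contains a spanning tree and weights are nonnegative. *)
lemma MST_contr_le_connecting:
  assumes fV: "finite V" and r: "r \<in> V" and EC: "E \<subseteq> contr_edges V U"
    and nonneg: "\<forall>(a, b)\<in>E. 0 \<le> d a b"
    and conn: "\<forall>x\<in>contr U ` V. (contr U r, x) \<in> (adj (contr U) E)\<^sup>*"
  shows "MST_contr V d U \<le> (\<Sum>(a, b)\<in>E. d a b)"
proof -
  have fCE: "finite (contr_edges V U)"
    by (rule finite_subset[of _ "V \<times> V"]) (use fV in \<open>auto simp: contr_edges_def\<close>)
  then have fE: "finite E" using EC finite_subset by blast
  have EW: "\<forall>(a, b)\<in>E. contr U a \<in> contr U ` V \<and> contr U b \<in> contr U ` V"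
    using EC unfolding contr_edges_def by auto
  obtain F where F: "F \<subseteq> E" "card F + 1 = card (contr U ` V)"
    "\<forall>x\<in>contr U ` V. \<forall>y\<in>contr U ` V. (x, y) \<in> (adj (contr U) F)\<^sup>*"
    using spanning_subtree_exists[OF finite_imageI[OF fV] fE imageI[OF r] EW conn] by blast
  have "is_spanning_tree_contr V U F"
    using F EC unfolding is_spanning_tree_contr_def adj_def by blast
  define costs where "costs = {(\<Sum>(a, b)\<in>F. d a b) | F. is_spanning_tree_contr V U F}"
  have "costs \<subseteq> (\<lambda>F. \<Sum>(a, b)\<in>F. d a b) ` Pow (contr_edges V U)"
    unfolding costs_def is_spanning_tree_contr_def by blast
  then have "finite costs" using fCE finite_subset by blast
  then have "MST_contr V d U \<le> (\<Sum>(a, b)\<in>F. d a b)"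
    unfolding MST_contr_def costs_def[symmetric]
    using \<open>is_spanning_tree_contr V U F\<close> by (intro Min_le) (auto simp: costs_def)
  also have "\<dots> \<le> (\<Sum>(a, b)\<in>E. d a b)"
    using nonneg F(1) by (intro sum_mono2[OF fE]) auto
  finally show ?thesis .
qed

lemma dist_le_path_length:
  assumes m: "metric_on V d" and tV: "set t \<subseteq> V"
  shows "p \<le> q \<Longrightarrow> q < length t \<Longrightarrow> d (t!p) (t!q) \<le> (\<Sum>i\<in>{p..<q}. d (t!i) (t!Suc i))"
proof (induction q)
  case 0
  then have "t!0 \<in> V" using tV by auto
  then show ?case using 0 m unfolding metric_on_def by simp
next
  case (Suc q)
  show ?case
  proof (cases "p = Suc q")
    case True
    then have "t!p \<in> V" using tV Suc.prems by auto
    then show ?thesis using True m unfolding metric_on_def by simp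
  next
    case False
    then have pq: "p \<le> q" using Suc.prems by simp
    have V3: "t!p \<in> V" "t!q \<in> V" "t!Suc q \<in> V" using tV Suc.prems pq by auto
    have "d (t!p) (t!Suc q) \<le> d (t!p) (t!q) + d (t!q) (t!Suc q)"
      using m V3 unfolding metric_on_def by blast
    also have "\<dots> \<le> (\<Sum>i\<in>{p..<q}. d (t!i) (t!Suc i)) + d (t!q) (t!Suc q)"
      using Suc.IH pq Suc.prems by simp
    also have "\<dots> = (\<Sum>i\<in>{p..<Suc q}. d (t!i) (t!Suc i))" using pq by simp
    finally show ?thesis .
  qed
qed

lemma tour_radius:
  assumes m: "metric_on V d" and t: "is_tour V r t" and p: "p < length t"
  shows "2 * d r (t!p) \<le> tour_len d t"
proof -
  have tV: "set t \<subseteq> V" and ne: "t \<noteq> []" and h: "t!0 = r" and l: "t!(length t - 1) = r"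
    using t unfolding is_tour_def by (auto simp: hd_conv_nth last_conv_nth)
  have pl: "p \<le> length t - 1" using p by simp
  have out: "d r (t!p) \<le> (\<Sum>i\<in>{0..<p}. d (t!i) (t!Suc i))"
    using dist_le_path_length[OF m tV, of 0 p] p h by simp
  have return: "d (t!p) r \<le> (\<Sum>i\<in>{p..<length t - 1}. d (t!i) (t!Suc i))"
    using dist_le_path_length[OF m tV pl] ne l by simp
  have "t!p \<in> V" "r \<in> V" using tV ne h p by (metis nth_mem length_greater_0_conv subsetD)+
  then have "d (t!p) r = d r (t!p)" using m unfolding metric_on_def by auto
  moreover have "tour_len d t = (\<Sum>i\<in>{0..<p}. d (t!i) (t!Suc i)) + (\<Sum>i\<in>{p..<length t - 1}. d (t!i) (t!Suc i))"
    unfolding tour_len_def using sum.atLeastLessThan_concat[OF _ pl, of 0, symmetric]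
    by (simp add: atLeast0LessThan)
  ultimately show ?thesis using out return by simp
qed

definition tour_steps :: "(nat \<Rightarrow> 'a list) \<Rightarrow> nat set \<Rightarrow> ('a \<times> 'a) set" where
  "tour_steps \<tau> I = (\<lambda>(i, p). (\<tau> i ! p, \<tau> i ! Suc p)) ` (SIGMA i:I. {..<length (\<tau> i) - 1})"

lemma tour_steps_cost:
  assumes "finite I" and "\<forall>(a, b)\<in>tour_steps \<tau> I. 0 \<le> d a b"
  shows "(\<Sum>(a, b)\<in>tour_steps \<tau> I. d a b) \<le> (\<Sum>i\<in>I. tour_len d (\<tau> i))"
proof -
  define step where "step = (\<lambda>(i, p). (\<tau> i ! p, \<tau> i ! Suc p))"
  define Sg where "Sg = (SIGMA i:I. {..<length (\<tau> i) - 1})"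
  have "finite Sg" unfolding Sg_def using assms(1) by auto
  then have "(\<Sum>(a, b)\<in>step ` Sg. d a b) \<le> sum ((\<lambda>(a, b). d a b) \<circ> step) Sg"
    using assms(2) unfolding tour_steps_def step_def Sg_def
    by (intro sum_image_le) (auto split: prod.splits)
  also have "\<dots> = (\<Sum>i\<in>I. tour_len d (\<tau> i))"
    unfolding Sg_def tour_len_def step_def
    using sum.Sigma[OF assms(1), of "\<lambda>i. {..<length (\<tau> i) - 1}" "\<lambda>i p. d (\<tau> i ! p) (\<tau> i ! Suc p)"]
    by (simp add: case_prod_unfold)
  finally show ?thesis unfolding tour_steps_def step_def Sg_def .
qed

lemma walk_adj_path:
  assumes "\<forall>q. Suc q < length t \<longrightarrow> c (t!q) = c (t!Suc q) \<or> (t!q, t!Suc q) \<in> E"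
  shows "p < length t \<Longrightarrow> (c (t!0), c (t!p)) \<in> (adj c E)\<^sup>*"
proof (induction p)
  case 0 then show ?case by simp
next
  case (Suc p)
  then have IH: "(c (t!0), c (t!p)) \<in> (adj c E)\<^sup>*" by simp
  from assms Suc.prems have "c (t!p) = c (t!Suc p) \<or> (t!p, t!Suc p) \<in> E" by blast
  then show ?case
  proof
    assume "c (t!p) = c (t!Suc p)" then show ?thesis using IH by simp
  next
    assume "(t!p, t!Suc p) \<in> E"
    then have "(c (t!p), c (t!Suc p)) \<in> adj c E" unfolding adj_def by blast
    with IH show ?thesis by (rule rtrancl_into_rtrancl)
  qed
qed

(* Key bound: if tours from the depot (with r in U unless U is empty) visit every
   vertex outside U, then MST(G/U) is at most their total length, because their
   steps not inside U connect G/U. *)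
lemma MST_contr_le_tour_lengths:
  fixes \<tau> :: "nat \<Rightarrow> 'a list"
  assumes m: "metric_on V d" and r: "r \<in> V" and root: "U \<noteq> {} \<Longrightarrow> r \<in> U"
    and fI: "finite I" and tours: "\<forall>i\<in>I. is_tour V r (\<tau> i)"
    and cover: "V - U \<subseteq> (\<Union>i\<in>I. set (\<tau> i))"
  shows "MST_contr V d U \<le> (\<Sum>i\<in>I. tour_len d (\<tau> i))"
proof -
  define E where "E = tour_steps \<tau> I \<inter> contr_edges V U"
  have steps_in_V: "a \<in> V \<and> b \<in> V" if "(a, b) \<in> tour_steps \<tau> I" for a b
    using that tours unfolding tour_steps_def is_tour_def by (force intro: nth_mem)
  have conn: "(contr U r, contr U v) \<in> (adj (contr U) E)\<^sup>*" if v: "v \<in> V" for v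
  proof (cases "v \<in> U")
    case True
    then show ?thesis using root unfolding contr_def by auto
  next
    case False
    then obtain i p where i: "i \<in> I" and p: "p < length (\<tau> i)" "\<tau> i ! p = v"
      using cover v by (force simp: in_set_conv_nth)
    have "contr U (\<tau> i ! q) = contr U (\<tau> i ! Suc q) \<or> (\<tau> i ! q, \<tau> i ! Suc q) \<in> E"
      if q: "Suc q < length (\<tau> i)" for q
    proof (cases "\<tau> i ! q = \<tau> i ! Suc q \<or> (\<tau> i ! q \<in> U \<and> \<tau> i ! Suc q \<in> U)")
      case True then show ?thesis unfolding contr_def by auto
    next
      case False
      have "(\<tau> i ! q, \<tau> i ! Suc q) \<in> tour_steps \<tau> I"
        unfolding tour_steps_def using i q by force
      then show ?thesis using False steps_in_V unfolding E_def contr_edges_def by blast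
    qed
    moreover have "\<tau> i ! 0 = r" using tours i unfolding is_tour_def by (metis hd_conv_nth)
    ultimately show ?thesis using walk_adj_path[of "\<tau> i" "contr U" E, OF _ p(1)] p(2) by simp
  qed
  have nonneg: "\<forall>(a, b)\<in>tour_steps \<tau> I. 0 \<le> d a b"
    using steps_in_V d_nonneg[OF m] by blast
  have "MST_contr V d U \<le> (\<Sum>(a, b)\<in>E. d a b)"
    using m r conn nonneg unfolding E_def metric_on_def
    by (intro MST_contr_le_connecting) auto
  also have "\<dots> \<le> (\<Sum>(a, b)\<in>tour_steps \<tau> I. d a b)"
  proof (rule sum_mono2)
    show "finite (tour_steps \<tau> I)" unfolding tour_steps_def using fI by auto
  qed (use nonneg in \<open>auto simp: E_def\<close>)
  also have "\<dots> \<le> (\<Sum>i\<in>I. tour_len d (\<tau> i))"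
    by (rule tour_steps_cost[OF fI nonneg])
  finally show ?thesis .
qed

lemma root_in_levels_below:
  assumes "metric_on V d" "r \<in> V" "0 \<le> M" "levels_below V d r M l \<noteq> {}"
  shows "r \<in> levels_below V d r M l"
proof -
  have "l \<noteq> 0" using assms(4) unfolding levels_below_def by auto
  moreover have "r \<in> level V d r M 0" using assms unfolding metric_on_def level_def by simp
  ultimately show ?thesis unfolding levels_below_def by blast
qed

lemma level_cover:
  assumes "v \<in> V" "d r v \<le> 2^n * M"
  shows "\<exists>j\<le>n. v \<in> level V d r M j"
  using assms(2)
proof (induction n)
  case 0 then show ?case using assms(1) by (auto simp: level_def)
next
  case (Suc n)
  show ?case
  proof (cases "d r v \<le> 2^n * M")
    case True then show ?thesis using Suc.IH le_Suc_eq by blast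
  next
    case False
    then have "v \<in> level V d r M (Suc n)" using Suc.prems assms(1) by (auto simp: level_def)
    then show ?thesis by blast
  qed
qed

lemma far_outside_levels_below:
  assumes "v \<in> V" "v \<notin> levels_below V d r M l" "1 \<le> l"
  shows "2^(l-1) * M < d r v"
proof (rule ccontr)
  assume "\<not> ?thesis"
  then obtain j where "j \<le> l - 1" "v \<in> level V d r M j"
    using level_cover[OF assms(1)] by (meson not_less)
  then show False using assms(2,3) unfolding levels_below_def by auto
qed

lemma uncovered_visited_by_fast:
  assumes m: "metric_on V d" and sol: "is_solution V r k \<tau>"
    and slow: "\<forall>i<k. 1 \<le> spd i" and M: "0 < M" "M' \<le> 2 * M"
    and short: "\<forall>i<k. tour_len d (\<tau> i) < spd i * M'"
  shows "V - levels_below V d r M l \<subseteq> (\<Union>i\<in>{i. i < k \<and> 2^(l-1) \<le> spd i}. set (\<tau> i))"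
proof
  fix v assume v: "v \<in> V - levels_below V d r M l"
  then obtain i p where i: "i < k" and p: "p < length (\<tau> i)" "\<tau> i ! p = v"
    using sol unfolding is_solution_def by (force simp: in_set_conv_nth)
  have "1 \<le> spd i" using slow i by blast
  have "2^(l-1) \<le> spd i"
  proof (cases "l = 0")
    case True then show ?thesis using \<open>1 \<le> spd i\<close> by simp
  next
    case False
    have "2^(l-1) * M < d r v" using far_outside_levels_below[of v V] v False by simp
    also have "2 * d r v \<le> tour_len d (\<tau> i)"
      using tour_radius[OF m _ p(1)] sol i p(2) unfolding is_solution_def by blast
    then have "d r v < spd i * M' / 2" using short i by fastforce
    also have "\<dots> \<le> spd i * M"
      using M \<open>1 \<le> spd i\<close> mult_left_mono[of M' "2 * M" "spd i"] by (simp add: mult_ac)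
    finally show ?thesis using M by simp
  qed
  then show "v \<in> (\<Union>i\<in>{i. i < k \<and> 2^(l-1) \<le> spd i}. set (\<tau> i))"
    using i p by auto
qed

lemma fast_speed_sum:
  assumes pow2: "\<forall>i<k. \<exists>j::nat. spd i = 2 ^ j"
  shows "(\<Sum>i | i < k \<and> 2^m \<le> spd i. spd i)
       = (\<Sum>j | m \<le> j \<and> mu k spd j \<noteq> 0. 2 ^ j * real (mu k spd j))"
proof -
  define A where "A j = {i. i < k \<and> spd i = 2 ^ j}" for j
  define J where "J = {j. m \<le> j \<and> mu k spd j \<noteq> 0}"
  have "inj (\<lambda>j::nat. (2::real) ^ j)" by (simp add: inj_def)
  moreover have "J \<subseteq> (\<lambda>j. 2 ^ j) -` (spd ` {..<k})"
    unfolding J_def mu_def by (auto dest!: card_ge_0_finite intro: image_eqI[OF sym])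
  ultimately have fJ: "finite J" by (meson finite_imageI finite_lessThan finite_subset finite_vimageI)
  have "(\<Sum>j\<in>J. 2 ^ j * real (mu k spd j)) = (\<Sum>j\<in>J. \<Sum>i\<in>A j. spd i)"
    unfolding mu_def A_def by (simp add: mult.commute)
  also have "\<dots> = (\<Sum>i\<in>(\<Union>j\<in>J. A j). spd i)"
    using fJ by (intro sum.UNION_disjoint[symmetric]) (auto simp: A_def)
  also have "(\<Union>j\<in>J. A j) = {i. i < k \<and> 2^m \<le> spd i}"
  proof (intro set_eqI iffI)
    fix i assume "i \<in> (\<Union>j\<in>J. A j)"
    then show "i \<in> {i. i < k \<and> 2^m \<le> spd i}" unfolding A_def J_def by auto
  next
    fix i assume i: "i \<in> {i. i < k \<and> 2^m \<le> spd i}"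
    then obtain j where j: "spd i = 2 ^ j" using pow2 by auto
    then have "i \<in> A j" "m \<le> j" using i unfolding A_def by auto
    moreover have "mu k spd j = card (A j)" "finite (A j)" unfolding mu_def A_def by simp_all
    then have "mu k spd j \<noteq> 0" using \<open>i \<in> A j\<close> by auto
    ultimately show "i \<in> (\<Union>j\<in>J. A j)" unfolding J_def by blast
  qed
  finally show ?thesis unfolding J_def by simp
qed

(* Above the optimal makespan M' there is a solution in which vehicle i drives less
   than spd i * M'; solutions exist since one vehicle can visit everything. *)
lemma near_optimal_solution:
  assumes fV: "finite V" and r: "r \<in> V" and k: "1 \<le> k" and pos: "\<forall>i<k. 0 < spd i"
    and opt: "opt_makespan V d r k spd < M'"
  obtains \<tau> where "is_solution V r k \<tau>" and "\<forall>i<k. tour_len d (\<tau> i) < spd i * M'"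
proof -
  define X where "X = {makespan d k spd \<tau> | \<tau>. is_solution V r k \<tau>}"
  obtain xs where xs: "set xs = V" using finite_list[OF fV] by blast
  have "is_solution V r k (\<lambda>_. r # xs @ [r])"
    unfolding is_solution_def is_tour_def using xs r k by (auto simp: lessThan_empty_iff)
  then have "X \<noteq> {}" unfolding X_def by blast
  then obtain \<tau> where sol: "is_solution V r k \<tau>" and ms: "makespan d k spd \<tau> < M'"
    using cInf_lessD[of X M'] opt unfolding opt_makespan_def X_def by blast
  have "tour_len d (\<tau> i) < spd i * M'" if i: "i < k" for i
  proof -
    have "tour_len d (\<tau> i) / spd i \<le> makespan d k spd \<tau>"
      unfolding makespan_def using i by (intro Max_ge) auto
    then have "tour_len d (\<tau> i) / spd i < M'" using ms by simp
    then show ?thesis using pos i by (simp add: pos_divide_less_eq mult.commute)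
  qed
  then show thesis using sol that by blast
qed

lemma le_of_le_above:
  fixes x M S :: real
  assumes M: "0 < M" and S: "0 \<le> S" and above: "\<And>M'. M < M' \<Longrightarrow> M' < 2 * M \<Longrightarrow> x \<le> M' * S"
  shows "x \<le> M * S"
proof (cases "S = 0")
  case True then show ?thesis using above[of "3/2 * M"] M by simp
next
  case False
  then have "x / S \<le> M" using S M above by (intro dense_ge_bounded[of M "2 * M"]) (auto simp: divide_le_eq)
  then show ?thesis using S False by (simp add: divide_le_eq)
qed

lemma MST_levels_below_le_fast_speeds:
  assumes m: "metric_on V d" and r: "r \<in> V" and k: "1 \<le> k" and slow: "\<forall>i<k. 1 \<le> spd i"
    and M: "0 < M" "M < M'" "M' < 2 * M" and opt: "opt_makespan V d r k spd \<le> M"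
  shows "MST_contr V d (levels_below V d r M l) \<le> M' * (\<Sum>i | i < k \<and> 2^(l-1) \<le> spd i. spd i)"
proof -
  define U where "U = levels_below V d r M l"
  define I where "I = {i. i < k \<and> 2^(l-1) \<le> spd i}"
  have "finite V" using m unfolding metric_on_def by simp
  moreover have "\<forall>i<k. 0 < spd i" using slow by force
  moreover have "opt_makespan V d r k spd < M'" using opt M by simp
  ultimately obtain \<tau> where sol: "is_solution V r k \<tau>"
    and short: "\<forall>i<k. tour_len d (\<tau> i) < spd i * M'"
    using near_optimal_solution[OF _ r k] by blast
  have "MST_contr V d U \<le> (\<Sum>i\<in>I. tour_len d (\<tau> i))"
  proof (rule MST_contr_le_tour_lengths[OF m r])
    show "U \<noteq> {} \<Longrightarrow> r \<in> U" using root_in_levels_below[OF m r] M unfolding U_def by simp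
    show "finite I" unfolding I_def by simp
    show "\<forall>i\<in>I. is_tour V r (\<tau> i)" using sol unfolding I_def is_solution_def by auto
    show "V - U \<subseteq> (\<Union>i\<in>I. set (\<tau> i))"
      using uncovered_visited_by_fast[OF m sol slow M(1) _ short] M unfolding U_def I_def by simp
  qed
  also have "\<dots> \<le> (\<Sum>i\<in>I. spd i * M')"
    using short by (intro sum_mono) (auto simp: I_def less_imp_le)
  finally show ?thesis unfolding U_def I_def by (simp add: sum_distrib_left mult.commute)
qed

theorem lemma3:
  fixes V :: "'a set" and d :: "'a \<Rightarrow> 'a \<Rightarrow> real" and r :: 'a
    and k :: nat and spd :: "nat \<Rightarrow> real" and M :: real and l :: nat
  assumes "metric_on V d" and "r \<in> V" and "k \<ge> 1"
    and "\<forall>i<k. spd i \<ge> 1"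
    and "\<forall>i<k. \<exists>j::nat. spd i = 2 ^ j"
    and "M > 0"
    and "opt_makespan V d r k spd \<le> M"
  shows "MST_contr V d (levels_below V d r M l)
           \<le> M * (\<Sum>j | l - 1 \<le> j \<and> mu k spd j \<noteq> 0. 2 ^ j * real (mu k spd j))"
  unfolding fast_speed_sum[OF assms(5), symmetric]
proof (rule le_of_le_above[OF \<open>M > 0\<close>])
  show "0 \<le> (\<Sum>i | i < k \<and> 2^(l-1) \<le> spd i. spd i)"
    using assms(4) by (intro sum_nonneg) force
  show "MST_contr V d (levels_below V d r M l) \<le> M' * (\<Sum>i | i < k \<and> 2^(l-1) \<le> spd i. spd i)"
    if "M < M'" "M' < 2 * M" for M'
    using MST_levels_below_le_fast_speeds[OF assms(1-4,6) that assms(7)] .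
qed

end
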